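(* Let $\tau>0$, $\delta>0$ and $\kappa\in(0,1)$, and let $H':\mathbb{R}\to\mathbb{R}$ be the trilinear function $$H'(x)=\begin{cases} x+1 & x\le -\kappa,\\ -\frac{1-\kappa}{\kappa}\,x & -\kappa\le x\le \kappa,\\ x-1 & x\ge \kappa.\end{cases}$$ Consider the equation $$\tau\,\partial_t x(t,p)=\sigma(t)+\delta\,(p-\tfrac12)-H'\big(x(t,p)\big).\qquad (\ast)$$ Then $(\ast)$ admits two families of traveling wave solutions, left moving ($\Omega<0$) and right moving ($\Omega>0$), of the form $$x_{\mathrm{TW}}(t,p)=X(P),\qquad P=p-\Omega t,\qquad \sigma_{\mathrm{TW}}(t)=\Sigma-\delta\,(\Omega t-\tfrac12),$$ which are strictly increasing with respect to $p$. They are given as follows, for real numbers $\Xi_-<\Xi_+$. For $\Omega<0$: $X=X_L$ and $\Sigma=\Sigma_L$, where $$X_L(P)=\begin{cases}-\kappa+\delta(P-\Xi_-) & P\le \Xi_-,\\[2pt] -\kappa-\dfrac{\kappa\delta}{1-\kappa}(P-\Xi_-)-\dfrac{\kappa\tau\Omega\delta}{(1-\kappa)^2}\Big(\exp\Big(-\dfrac{1-\kappa}{\kappa\tau\Omega}(P-\Xi_-)\Big)-1\Big) & \Xi_-\le P\le \Xi_+,\\[2pt] \kappa+\delta(P-\Xi_+)+\big(2(1-\kappa)+\delta(\Xi_+-\Xi_-)\big)\Big(1-\exp\Big(\dfrac{P-\Xi_+}{\tau\Omega}\Big)\Big) & \Xi_+\le P,\end{cases}$$ $$\Sigma_L=1-\kappa-\tau\Omega\delta-\delta\,\Xi_-.$$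 For $\Omega>0$: $X=X_R$ and $\Sigma=\Sigma_R$, where $$X_R(P)=\begin{cases}-\kappa+\delta(P-\Xi_-)+\big(2(1-\kappa)+\delta(\Xi_+-\Xi_-)\big)\Big(-1+\exp\Big(\dfrac{P-\Xi_-}{\tau\Omega}\Big)\Big) & P\le \Xi_-,\\[2pt] \kappa-\dfrac{\kappa\delta}{1-\kappa}(P-\Xi_+)-\dfrac{\kappa\tau\Omega\delta}{(1-\kappa)^2}\Big(\exp\Big(-\dfrac{1-\kappa}{\kappa\tau\Omega}(P-\Xi_+)\Big)-1\Big) & \Xi_-\le P\le \Xi_+,\\[2pt] \kappa+\delta(P-\Xi_+) & \Xi_+\le P,\end{cases}$$ $$\Sigma_R=-1+\kappa-\tau\Omega\delta-\delta\,\Xi_+.$$ In both cases this holds provided that the transcendental equation $$\frac{2(1-\kappa)^2}{\tau|\Omega|\delta}+\frac{1-\kappa}{\tau|\Omega|}\,(\Xi_+-\Xi_-)=\exp\Big(\frac{1-\kappa}{\kappa\tau|\Omega|}(\Xi_+-\Xi_-)\Big)-1$$ is satisfied. In particular, the wave speed $\Omega$ can be regarded as the independent parameter: it determines the interface width $\Xi_+-\Xi_-$ but not the interface position $\tfrac12(\Xi_-+\Xi_+)$.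
   Context: The equation $(\ast)$ is considered here with the index variable $p$ ranging over $\mathbb{R}$ and the function $\sigma$ prescribed as stated; no integral (mean-field) constraint is imposed on the solution. The parameter $\tau>0$ is a relaxation time, $\delta>0$ is the strength of a linear disorder function $\theta(p)=\delta(p-\tfrac12)$, and $[-\kappa,\kappa]$ is the spinodal region of $H'$. For the traveling waves, $X(P)<-\kappa$ for $P<\Xi_-$, $X(P)\in(-\kappa,\kappa)$ for $\Xi_-<P<\Xi_+$, and $X(P)>\kappa$ for $P>\Xi_+$. *)

theory Defs
  imports "HOL-Analysis.Analysis"
begin

definition Hprime :: "real \<Rightarrow> real \<Rightarrow> real" where
  "Hprime \<kappa> x = (if x \<le> -\<kappa> then x + 1
                   else if x \<le> \<kappa> then - ((1 - \<kappa>) / \<kappa>) * x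
                   else x - 1)"

definition X_L :: "real \<Rightarrow> real \<Rightarrow> real \<Rightarrow> real \<Rightarrow> real \<Rightarrow> real \<Rightarrow> real \<Rightarrow> real" where
  "X_L \<tau> \<delta> \<kappa> \<Omega> \<Xi>m \<Xi>p P =
    (if P \<le> \<Xi>m then - \<kappa> + \<delta> * (P - \<Xi>m)
     else if P \<le> \<Xi>p then
       - \<kappa> - (\<kappa> * \<delta> / (1 - \<kappa>)) * (P - \<Xi>m)
         - (\<kappa> * \<tau> * \<Omega> * \<delta> / (1 - \<kappa>)\<^sup>2)
           * (exp (- ((1 - \<kappa>) / (\<kappa> * \<tau> * \<Omega>)) * (P - \<Xi>m)) - 1)
     else \<kappa> + \<delta> * (P - \<Xi>p)
       + (2 * (1 - \<kappa>) + \<delta> * (\<Xi>p - \<Xi>m)) * (1 - exp ((P - \<Xi>p) / (\<tau> * \<Omega>))))"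

definition Sigma_L :: "real \<Rightarrow> real \<Rightarrow> real \<Rightarrow> real \<Rightarrow> real \<Rightarrow> real" where
  "Sigma_L \<tau> \<delta> \<kappa> \<Omega> \<Xi>m = 1 - \<kappa> - \<tau> * \<Omega> * \<delta> - \<delta> * \<Xi>m"

definition X_R :: "real \<Rightarrow> real \<Rightarrow> real \<Rightarrow> real \<Rightarrow> real \<Rightarrow> real \<Rightarrow> real \<Rightarrow> real" where
  "X_R \<tau> \<delta> \<kappa> \<Omega> \<Xi>m \<Xi>p P =
    (if P \<le> \<Xi>m then - \<kappa> + \<delta> * (P - \<Xi>m)
       + (2 * (1 - \<kappa>) + \<delta> * (\<Xi>p - \<Xi>m)) * (-1 + exp ((P - \<Xi>m) / (\<tau> * \<Omega>)))
     else if P \<le> \<Xi>p then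
       \<kappa> - (\<kappa> * \<delta> / (1 - \<kappa>)) * (P - \<Xi>p)
         - (\<kappa> * \<tau> * \<Omega> * \<delta> / (1 - \<kappa>)\<^sup>2)
           * (exp (- ((1 - \<kappa>) / (\<kappa> * \<tau> * \<Omega>)) * (P - \<Xi>p)) - 1)
     else \<kappa> + \<delta> * (P - \<Xi>p))"

definition Sigma_R :: "real \<Rightarrow> real \<Rightarrow> real \<Rightarrow> real \<Rightarrow> real \<Rightarrow> real" where
  "Sigma_R \<tau> \<delta> \<kappa> \<Omega> \<Xi>p = -1 + \<kappa> - \<tau> * \<Omega> * \<delta> - \<delta> * \<Xi>p"

definition X_TW :: "real \<Rightarrow> real \<Rightarrow> real \<Rightarrow> real \<Rightarrow> real \<Rightarrow> real \<Rightarrow> real \<Rightarrow> real" where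
  "X_TW \<tau> \<delta> \<kappa> \<Omega> \<Xi>m \<Xi>p =
    (if \<Omega> < 0 then X_L \<tau> \<delta> \<kappa> \<Omega> \<Xi>m \<Xi>p else X_R \<tau> \<delta> \<kappa> \<Omega> \<Xi>m \<Xi>p)"

definition Sigma_TW :: "real \<Rightarrow> real \<Rightarrow> real \<Rightarrow> real \<Rightarrow> real \<Rightarrow> real \<Rightarrow> real" where
  "Sigma_TW \<tau> \<delta> \<kappa> \<Omega> \<Xi>m \<Xi>p =
    (if \<Omega> < 0 then Sigma_L \<tau> \<delta> \<kappa> \<Omega> \<Xi>m else Sigma_R \<tau> \<delta> \<kappa> \<Omega> \<Xi>p)"

end

theory Submission
  imports Defs
begin

text \<open>Substituting x(t,p) = X(p - \<Omega> t) and \<sigma>(t) = \<Sigma> - \<delta>(\<Omega> t - 1/2) turns the equation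
  into the profile equation -\<tau> \<Omega> X' = \<Sigma> + \<delta> P - H'(X). On each of the three phases H' is
  affine, so there the profile equation is a linear ODE with constant coefficients and affine
  forcing, solved by an affine function plus an exponential; these are the three branches of X_L
  and X_R. Each branch is anchored at an interface point, where it takes the value -\<kappa> or \<kappa>;
  that the spinodal branch also reaches the right value at the other interface point is exactly
  the transcendental equation. Continuity of X' at \<Xi>- and \<Xi>+ is then automatic, because H' is
  continuous and adjacent branches solve the profile equation with equal values there. Finally
  X' > 0, so X crosses -\<kappa> and \<kappa> exactly at \<Xi>- and \<Xi>+, which confirms that each branch
  was solved with the correct branch of H'.\<close>

definition increasing_wave_profile ::
    "real \<Rightarrow> real \<Rightarrow> real \<Rightarrow> real \<Rightarrow> real \<Rightarrow> (real \<Rightarrow> real) \<Rightarrow> bool" where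
  "increasing_wave_profile \<tau> \<delta> \<kappa> \<Omega> \<Sigma> X \<longleftrightarrow>
     (\<forall>P. \<exists>D>0. (X has_real_derivative D) (at P) \<and>
                - (\<tau> * \<Omega> * D) = \<Sigma> + \<delta> * P - Hprime \<kappa> (X P))"

lemma DERIV_pos_imp_strict_mono:
  fixes f :: "real \<Rightarrow> real"
  assumes "\<And>x. \<exists>D>0. (f has_real_derivative D) (at x)"
  shows "strict_mono f"
  by (rule strict_monoI) (meson DERIV_pos_imp_increasing assms)

lemma has_real_derivative_if_le:
  fixes f g f' g' :: "real \<Rightarrow> real"
  assumes "\<And>x. (f has_real_derivative f' x) (at x)" "\<And>x. (g has_real_derivative g' x) (at x)"
    and "f a = g a" "f' a = g' a"
  shows "((\<lambda>x. if x \<le> a then f x else g x) has_real_derivative (if x \<le> a then f' x else g' x)) (at x)"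
proof -
  have "((\<lambda>x. if x \<in> {..a} then f x else g x) has_vector_derivative (if x \<in> {..a} then f' x else g' x))
     (at x within UNIV)"
    by (rule has_vector_derivative_If_within_closures[where T="{a<..}"])
      (use assms in \<open>auto simp: has_real_derivative_iff_has_vector_derivative[symmetric]
                               intro: has_field_derivative_at_within\<close>)
  then show ?thesis by (simp add: has_real_derivative_iff_has_vector_derivative)
qed

lemma Hprime_along_increasing:
  fixes X :: "real \<Rightarrow> real"
  assumes "strict_mono X" "X \<Xi>m = - \<kappa>" "X \<Xi>p = \<kappa>"
  shows "Hprime \<kappa> (X P) = (if P \<le> \<Xi>m then X P + 1
                           else if P \<le> \<Xi>p then - ((1 - \<kappa>) / \<kappa>) * X P else X P - 1)"
  using strict_mono_less_eq[OF assms(1), of P \<Xi>m] strict_mono_less_eq[OF assms(1), of P \<Xi>p] assms(2,3)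
  by (simp add: Hprime_def)

lemma increasing_wave_profile_strict_mono:
  "increasing_wave_profile \<tau> \<delta> \<kappa> \<Omega> \<Sigma> X \<Longrightarrow> strict_mono X"
  unfolding increasing_wave_profile_def by (meson DERIV_pos_imp_strict_mono)

lemma traveling_wave_has_real_derivative:
  assumes "\<tau> \<noteq> 0" and X: "increasing_wave_profile \<tau> \<delta> \<kappa> \<Omega> \<Sigma> X"
  shows "((\<lambda>s. X (p - \<Omega> * s)) has_real_derivative
           ((\<Sigma> - \<delta> * (\<Omega> * t - 1 / 2)) + \<delta> * (p - 1 / 2) - Hprime \<kappa> (X (p - \<Omega> * t))) / \<tau>) (at t)"
proof -
  obtain D where D: "(X has_real_derivative D) (at (p - \<Omega> * t))"
    and ode: "- (\<tau> * \<Omega> * D) = \<Sigma> + \<delta> * (p - \<Omega> * t) - Hprime \<kappa> (X (p - \<Omega> * t))"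
    using X unfolding increasing_wave_profile_def by blast
  have "((\<lambda>s. X (p - \<Omega> * s)) has_real_derivative D * (- \<Omega>)) (at t)"
    by (rule DERIV_chain2[where g = "\<lambda>s. p - \<Omega> * s", OF D]) (auto intro!: derivative_eq_intros)
  moreover have "D * (- \<Omega>) = ((\<Sigma> - \<delta> * (\<Omega> * t - 1 / 2)) + \<delta> * (p - 1 / 2) - Hprime \<kappa> (X (p - \<Omega> * t))) / \<tau>"
    using ode assms(1) by (simp add: field_simps)
  ultimately show ?thesis by simp
qed

lemma increasing_wave_profile_three_pieces:
  fixes f1 f2 f3 f1' f2' f3' :: "real \<Rightarrow> real"
  assumes "\<tau> * \<Omega> \<noteq> 0" "\<kappa> \<noteq> 0" "\<Xi>m < \<Xi>p"
    and deriv: "\<And>P. (f1 has_real_derivative f1' P) (at P)"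
      "\<And>P. (f2 has_real_derivative f2' P) (at P)"
      "\<And>P. (f3 has_real_derivative f3' P) (at P)"
    and ode1: "\<And>P. - (\<tau> * \<Omega> * f1' P) = \<Sigma> + \<delta> * P - (f1 P + 1)"
    and ode2: "\<And>P. - (\<tau> * \<Omega> * f2' P) = \<Sigma> + \<delta> * P - (- ((1 - \<kappa>) / \<kappa>) * f2 P)"
    and ode3: "\<And>P. - (\<tau> * \<Omega> * f3' P) = \<Sigma> + \<delta> * P - (f3 P - 1)"
    and junction: "f1 \<Xi>m = - \<kappa>" "f2 \<Xi>m = - \<kappa>" "f2 \<Xi>p = \<kappa>" "f3 \<Xi>p = \<kappa>"
    and pos: "\<And>P. P \<le> \<Xi>m \<Longrightarrow> 0 < f1' P"
      "\<And>P. \<Xi>m < P \<Longrightarrow> P \<le> \<Xi>p \<Longrightarrow> 0 < f2' P"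
      "\<And>P. \<Xi>p < P \<Longrightarrow> 0 < f3' P"
  defines "X \<equiv> \<lambda>P. if P \<le> \<Xi>m then f1 P else if P \<le> \<Xi>p then f2 P else f3 P"
  shows "increasing_wave_profile \<tau> \<delta> \<kappa> \<Omega> \<Sigma> X \<and> X \<Xi>m = - \<kappa> \<and> X \<Xi>p = \<kappa>"
proof -
  define D where "D P = (if P \<le> \<Xi>m then f1' P else if P \<le> \<Xi>p then f2' P else f3' P)" for P
  have "- ((1 - \<kappa>) / \<kappa>) * - \<kappa> = - \<kappa> + 1" "- ((1 - \<kappa>) / \<kappa>) * \<kappa> = \<kappa> - 1"
    using \<open>\<kappa> \<noteq> 0\<close> by (simp_all add: field_simps)
  then have "\<tau> * \<Omega> * f1' \<Xi>m = \<tau> * \<Omega> * f2' \<Xi>m" "\<tau> * \<Omega> * f2' \<Xi>p = \<tau> * \<Omega> * f3' \<Xi>p"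
    using ode1[of \<Xi>m] ode2[of \<Xi>m] ode2[of \<Xi>p] ode3[of \<Xi>p] unfolding junction by linarith+
  then have "f1' \<Xi>m = f2' \<Xi>m" "f2' \<Xi>p = f3' \<Xi>p"
    using \<open>\<tau> * \<Omega> \<noteq> 0\<close> by simp_all
  then have "(X has_real_derivative D P) (at P)" for P
    unfolding X_def D_def using junction \<open>\<Xi>m < \<Xi>p\<close>
    by (intro has_real_derivative_if_le deriv has_real_derivative_if_le) auto
  moreover have "0 < D P" for P
    using pos by (auto simp: D_def not_le)
  moreover have "- (\<tau> * \<Omega> * D P) = \<Sigma> + \<delta> * P - (if P \<le> \<Xi>m then X P + 1
                 else if P \<le> \<Xi>p then - ((1 - \<kappa>) / \<kappa>) * X P else X P - 1)" for P
    using ode1 ode2 ode3 by (simp add: D_def X_def)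
  ultimately have deriv_X: "\<exists>D>0. (X has_real_derivative D) (at P) \<and>
      - (\<tau> * \<Omega> * D) = \<Sigma> + \<delta> * P - (if P \<le> \<Xi>m then X P + 1
                           else if P \<le> \<Xi>p then - ((1 - \<kappa>) / \<kappa>) * X P else X P - 1)" for P
    by blast
  have ends: "X \<Xi>m = - \<kappa>" "X \<Xi>p = \<kappa>"
    using junction \<open>\<Xi>m < \<Xi>p\<close> by (simp_all add: X_def)
  have "strict_mono X"
    using deriv_X by (meson DERIV_pos_imp_strict_mono)
  with deriv_X ends show ?thesis
    unfolding increasing_wave_profile_def by (simp add: Hprime_along_increasing)
qed

definition affexp :: "real \<Rightarrow> real \<Rightarrow> real \<Rightarrow> real \<Rightarrow> real \<Rightarrow> real \<Rightarrow> real" where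
  "affexp y0 b A r P0 P = y0 + b * (P - P0) + A * (exp (r * (P - P0)) - 1)"

definition affexp_deriv :: "real \<Rightarrow> real \<Rightarrow> real \<Rightarrow> real \<Rightarrow> real \<Rightarrow> real" where
  "affexp_deriv b A r P0 P = b + A * r * exp (r * (P - P0))"

lemma affexp_base [simp]: "affexp y0 b A r P0 P0 = y0"
  by (simp add: affexp_def)

lemma has_real_derivative_affexp:
  "(affexp y0 b A r P0 has_real_derivative affexp_deriv b A r P0 P) (at P)"
  unfolding affexp_def affexp_deriv_def by (auto intro!: derivative_eq_intros)

lemma affexp_linear_ode:
  assumes "c * r = a" "a * b = \<delta>" "- (c * b) = \<Sigma> + \<delta> * P0 - a * y0 + a * A - k"
  shows "- (c * affexp_deriv b A r P0 P) = \<Sigma> + \<delta> * P - (a * affexp y0 b A r P0 P + k)"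
proof -
  have "- (c * affexp_deriv b A r P0 P) = - (c * b) - (c * r) * A * exp (r * (P - P0))"
    by (simp add: affexp_deriv_def algebra_simps)
  also have "\<dots> = \<Sigma> + \<delta> * P - (a * affexp y0 b A r P0 P + k)"
    unfolding assms(1,3) affexp_def assms(2)[symmetric] by (simp add: algebra_simps)
  finally show ?thesis .
qed

lemma stable_affexp_ode:
  assumes "c \<noteq> 0" "\<Sigma> + \<delta> * P0 - y0 + A - k = - (c * \<delta>)"
  shows "- (c * affexp_deriv \<delta> A (1 / c) P0 P) = \<Sigma> + \<delta> * P - (affexp y0 \<delta> A (1 / c) P0 P + k)"
  by (rule affexp_linear_ode[where a = 1, simplified mult_1_left]) (use assms in simp_all)

lemma stable_affexp_deriv_pos:
  assumes "0 < \<delta>" "0 \<le> A / c"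
  shows "0 < affexp_deriv \<delta> A (1 / c) P0 P"
proof -
  have "0 \<le> A / c * exp ((P - P0) / c)"
    using assms(2) by (intro mult_nonneg_nonneg) simp_all
  then show ?thesis
    using assms(1) unfolding affexp_deriv_def by simp
qed

lemma spinodal_affexp:
  fixes c \<kappa> \<delta> :: real
  assumes "c \<noteq> 0" "0 < \<kappa>" "\<kappa> < 1" "0 < \<delta>"
  defines "b \<equiv> - (\<kappa> * \<delta> / (1 - \<kappa>))" and "A \<equiv> - (\<kappa> * c * \<delta> / (1 - \<kappa>)\<^sup>2)"
    and "r \<equiv> - ((1 - \<kappa>) / (\<kappa> * c))"
  shows spinodal_affexp_ode: "\<Sigma> + \<delta> * P0 + (1 - \<kappa>) / \<kappa> * y0 = - (c * \<delta>) \<Longrightarrow>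
      - (c * affexp_deriv b A r P0 P) = \<Sigma> + \<delta> * P - (- ((1 - \<kappa>) / \<kappa>) * affexp y0 b A r P0 P)"
    and spinodal_affexp_deriv_pos: "0 \<le> r * (P - P0) \<Longrightarrow> 0 < affexp_deriv b A r P0 P"
proof -
  \<comment> \<open>Stated for an abstract m = 1 - \<kappa>: otherwise field_simps expands the square of 1 - \<kappa> and
    loses track of its non-vanishing.\<close>
  have "- (\<kappa> * c * \<delta> / m\<^sup>2) * - (m / (\<kappa> * c)) = \<delta> / m"
    and "- (m / \<kappa>) * - (\<kappa> * c * \<delta> / m\<^sup>2) = c * \<delta> / m" if "m \<noteq> 0" for m
    using that assms(1,2) by (simp_all add: field_simps power2_eq_square)
  then have Ar: "A * r = \<delta> / (1 - \<kappa>)" and A: "- ((1 - \<kappa>) / \<kappa>) * A = c * \<delta> / (1 - \<kappa>)"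
    unfolding A_def r_def using assms(3) by simp_all
  show "- (c * affexp_deriv b A r P0 P) = \<Sigma> + \<delta> * P - (- ((1 - \<kappa>) / \<kappa>) * affexp y0 b A r P0 P)"
    if "\<Sigma> + \<delta> * P0 + (1 - \<kappa>) / \<kappa> * y0 = - (c * \<delta>)"
  proof (rule affexp_linear_ode[where k = 0, simplified add_0_right diff_0_right])
    show "c * r = - ((1 - \<kappa>) / \<kappa>)"
      using assms(1) by (simp add: r_def)
    show "- ((1 - \<kappa>) / \<kappa>) * b = \<delta>"
      using assms(2,3) by (simp add: b_def)
    have "\<Sigma> + \<delta> * P0 - - ((1 - \<kappa>) / \<kappa>) * y0 = - (c * \<delta>)"
      using that by simp
    then show "- (c * b) = \<Sigma> + \<delta> * P0 - - ((1 - \<kappa>) / \<kappa>) * y0 + - ((1 - \<kappa>) / \<kappa>) * A"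
      unfolding A using assms(3) by (simp add: b_def field_simps)
  qed
  show "0 < affexp_deriv b A r P0 P" if "0 \<le> r * (P - P0)"
  proof -
    have "\<kappa> < exp (r * (P - P0))"
      using that assms(3) by (meson less_le_trans one_le_exp_iff)
    moreover have "affexp_deriv b A r P0 P = \<delta> / (1 - \<kappa>) * (exp (r * (P - P0)) - \<kappa>)"
      using Ar by (simp add: affexp_deriv_def b_def algebra_simps)
    ultimately show ?thesis
      using assms(3,4) by simp
  qed
qed

lemma interface_width_equation_scaled:
  fixes \<tau> \<Omega> \<delta> \<kappa> w :: real
  assumes "\<tau> * \<bar>\<Omega>\<bar> * \<delta> \<noteq> 0" "\<kappa> \<noteq> 1"
    and "2 * (1 - \<kappa>)\<^sup>2 / (\<tau> * \<bar>\<Omega>\<bar> * \<delta>) + (1 - \<kappa>) / (\<tau> * \<bar>\<Omega>\<bar>) * w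
           = exp ((1 - \<kappa>) / (\<kappa> * \<tau> * \<bar>\<Omega>\<bar>) * w) - 1"
  shows "\<kappa> * \<tau> * \<bar>\<Omega>\<bar> * \<delta> / (1 - \<kappa>)\<^sup>2 * (exp ((1 - \<kappa>) / (\<kappa> * \<tau> * \<bar>\<Omega>\<bar>) * w) - 1)
           = 2 * \<kappa> + \<kappa> * \<delta> / (1 - \<kappa>) * w"
proof -
  have "\<kappa> * (s * d) / m\<^sup>2 * (2 * m\<^sup>2 / (s * d) + m / s * w) = 2 * \<kappa> + \<kappa> * d / m * w"
    if "s \<noteq> 0" "d \<noteq> 0" "m \<noteq> 0" for s d m :: real
    using that by (simp add: field_simps power2_eq_square)
  from this[of "\<tau> * \<bar>\<Omega>\<bar>" \<delta> "1 - \<kappa>"] show ?thesis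
    unfolding assms(3)[symmetric] using assms(1,2) by (simp add: mult.assoc)
qed

lemma X_L_increasing_wave_profile:
  assumes "\<tau> > 0" "\<delta> > 0" "0 < \<kappa>" "\<kappa> < 1" "\<Omega> < 0" "\<Xi>m < \<Xi>p"
    and transc: "2 * (1 - \<kappa>)\<^sup>2 / (\<tau> * \<bar>\<Omega>\<bar> * \<delta>) + (1 - \<kappa>) / (\<tau> * \<bar>\<Omega>\<bar>) * (\<Xi>p - \<Xi>m)
                 = exp ((1 - \<kappa>) / (\<kappa> * \<tau> * \<bar>\<Omega>\<bar>) * (\<Xi>p - \<Xi>m)) - 1"
  shows "increasing_wave_profile \<tau> \<delta> \<kappa> \<Omega> (Sigma_L \<tau> \<delta> \<kappa> \<Omega> \<Xi>m) (X_L \<tau> \<delta> \<kappa> \<Omega> \<Xi>m \<Xi>p)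
    \<and> X_L \<tau> \<delta> \<kappa> \<Omega> \<Xi>m \<Xi>p \<Xi>m = - \<kappa> \<and> X_L \<tau> \<delta> \<kappa> \<Omega> \<Xi>m \<Xi>p \<Xi>p = \<kappa>"
proof -
  define c where "c = \<tau> * \<Omega>"
  define \<Sigma> where "\<Sigma> = Sigma_L \<tau> \<delta> \<kappa> \<Omega> \<Xi>m"
  define C where "C = 2 * (1 - \<kappa>) + \<delta> * (\<Xi>p - \<Xi>m)"
  define b where "b = - (\<kappa> * \<delta> / (1 - \<kappa>))"
  define A where "A = - (\<kappa> * c * \<delta> / (1 - \<kappa>)\<^sup>2)"
  define r where "r = - ((1 - \<kappa>) / (\<kappa> * c))"
  have c: "c < 0" "\<bar>\<Omega>\<bar> = - \<Omega>"
    using assms unfolding c_def by (simp_all add: mult_pos_neg)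
  have \<Sigma>: "\<Sigma> = 1 - \<kappa> - c * \<delta> - \<delta> * \<Xi>m"
    by (simp add: \<Sigma>_def Sigma_L_def c_def)
  have X_L: "X_L \<tau> \<delta> \<kappa> \<Omega> \<Xi>m \<Xi>p = (\<lambda>P. if P \<le> \<Xi>m then affexp (- \<kappa>) \<delta> 0 (1 / c) \<Xi>m P
      else if P \<le> \<Xi>p then affexp (- \<kappa>) b A r \<Xi>m P else affexp \<kappa> \<delta> (- C) (1 / c) \<Xi>p P)"
    by (auto simp: X_L_def affexp_def b_def A_def r_def c_def C_def algebra_simps)
  have ode1: "- (c * affexp_deriv \<delta> 0 (1 / c) \<Xi>m P)
                = \<Sigma> + \<delta> * P - (affexp (- \<kappa>) \<delta> 0 (1 / c) \<Xi>m P + 1)" for P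
    by (rule stable_affexp_ode) (use c in \<open>simp_all add: \<Sigma>\<close>)
  have ode2: "- (c * affexp_deriv b A r \<Xi>m P)
                = \<Sigma> + \<delta> * P - (- ((1 - \<kappa>) / \<kappa>) * affexp (- \<kappa>) b A r \<Xi>m P)" for P
    unfolding b_def A_def r_def
    by (rule spinodal_affexp_ode) (use c assms in \<open>simp_all add: \<Sigma>\<close>)
  have ode3: "- (c * affexp_deriv \<delta> (- C) (1 / c) \<Xi>p P)
                = \<Sigma> + \<delta> * P - (affexp \<kappa> \<delta> (- C) (1 / c) \<Xi>p P - 1)" for P
    by (rule stable_affexp_ode[where k = "-1", simplified add_uminus_conv_diff])
      (use c in \<open>simp_all add: \<Sigma> C_def algebra_simps\<close>)
  have "0 < r"
    using assms(3,4) c by (simp add: r_def divide_pos_neg mult_pos_neg)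
  then have "0 \<le> r * (P - \<Xi>m)" if "\<Xi>m < P" for P
    using that by simp
  moreover have "0 < C"
    using assms(2,4,6) by (simp add: C_def add_pos_pos)
  ultimately have pos: "0 < affexp_deriv \<delta> 0 (1 / c) \<Xi>m P"
    "\<Xi>m < P \<Longrightarrow> 0 < affexp_deriv b A r \<Xi>m P"
    "0 < affexp_deriv \<delta> (- C) (1 / c) \<Xi>p P" for P
    using c assms(2-4) unfolding b_def A_def r_def
    by (auto intro!: stable_affexp_deriv_pos spinodal_affexp_deriv_pos simp: divide_pos_neg less_imp_le)
  have junction: "affexp (- \<kappa>) b A r \<Xi>m \<Xi>p = \<kappa>"
    using interface_width_equation_scaled[OF _ _ transc] assms c
    by (simp add: affexp_def b_def A_def r_def c_def mult.assoc)
  have "increasing_wave_profile \<tau> \<delta> \<kappa> \<Omega> \<Sigma> (X_L \<tau> \<delta> \<kappa> \<Omega> \<Xi>m \<Xi>p)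
    \<and> X_L \<tau> \<delta> \<kappa> \<Omega> \<Xi>m \<Xi>p \<Xi>m = - \<kappa> \<and> X_L \<tau> \<delta> \<kappa> \<Omega> \<Xi>m \<Xi>p \<Xi>p = \<kappa>"
    unfolding X_L c_def
    by (rule increasing_wave_profile_three_pieces[OF _ _ _
          has_real_derivative_affexp has_real_derivative_affexp has_real_derivative_affexp])
      (use ode1 ode2 ode3 pos junction assms in \<open>auto simp: c_def\<close>)
  then show ?thesis
    by (simp add: \<Sigma>_def)
qed

lemma X_R_increasing_wave_profile:
  assumes "\<tau> > 0" "\<delta> > 0" "0 < \<kappa>" "\<kappa> < 1" "0 < \<Omega>" "\<Xi>m < \<Xi>p"
    and transc: "2 * (1 - \<kappa>)\<^sup>2 / (\<tau> * \<bar>\<Omega>\<bar> * \<delta>) + (1 - \<kappa>) / (\<tau> * \<bar>\<Omega>\<bar>) * (\<Xi>p - \<Xi>m)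
                 = exp ((1 - \<kappa>) / (\<kappa> * \<tau> * \<bar>\<Omega>\<bar>) * (\<Xi>p - \<Xi>m)) - 1"
  shows "increasing_wave_profile \<tau> \<delta> \<kappa> \<Omega> (Sigma_R \<tau> \<delta> \<kappa> \<Omega> \<Xi>p) (X_R \<tau> \<delta> \<kappa> \<Omega> \<Xi>m \<Xi>p)
    \<and> X_R \<tau> \<delta> \<kappa> \<Omega> \<Xi>m \<Xi>p \<Xi>m = - \<kappa> \<and> X_R \<tau> \<delta> \<kappa> \<Omega> \<Xi>m \<Xi>p \<Xi>p = \<kappa>"
proof -
  define c where "c = \<tau> * \<Omega>"
  define \<Sigma> where "\<Sigma> = Sigma_R \<tau> \<delta> \<kappa> \<Omega> \<Xi>p"
  define C where "C = 2 * (1 - \<kappa>) + \<delta> * (\<Xi>p - \<Xi>m)"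
  define b where "b = - (\<kappa> * \<delta> / (1 - \<kappa>))"
  define A where "A = - (\<kappa> * c * \<delta> / (1 - \<kappa>)\<^sup>2)"
  define r where "r = - ((1 - \<kappa>) / (\<kappa> * c))"
  have c: "0 < c" "\<bar>\<Omega>\<bar> = \<Omega>"
    using assms unfolding c_def by simp_all
  have \<Sigma>: "\<Sigma> = - 1 + \<kappa> - c * \<delta> - \<delta> * \<Xi>p"
    by (simp add: \<Sigma>_def Sigma_R_def c_def)
  have X_R: "X_R \<tau> \<delta> \<kappa> \<Omega> \<Xi>m \<Xi>p = (\<lambda>P. if P \<le> \<Xi>m then affexp (- \<kappa>) \<delta> C (1 / c) \<Xi>m P
      else if P \<le> \<Xi>p then affexp \<kappa> b A r \<Xi>p P else affexp \<kappa> \<delta> 0 (1 / c) \<Xi>p P)"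
    by (auto simp: X_R_def affexp_def b_def A_def r_def c_def C_def algebra_simps)
  have ode1: "- (c * affexp_deriv \<delta> C (1 / c) \<Xi>m P)
                = \<Sigma> + \<delta> * P - (affexp (- \<kappa>) \<delta> C (1 / c) \<Xi>m P + 1)" for P
    by (rule stable_affexp_ode) (use c in \<open>simp_all add: \<Sigma> C_def algebra_simps\<close>)
  have ode2: "- (c * affexp_deriv b A r \<Xi>p P)
                = \<Sigma> + \<delta> * P - (- ((1 - \<kappa>) / \<kappa>) * affexp \<kappa> b A r \<Xi>p P)" for P
    unfolding b_def A_def r_def
    by (rule spinodal_affexp_ode) (use c assms in \<open>simp_all add: \<Sigma>\<close>)
  have ode3: "- (c * affexp_deriv \<delta> 0 (1 / c) \<Xi>p P)
                = \<Sigma> + \<delta> * P - (affexp \<kappa> \<delta> 0 (1 / c) \<Xi>p P - 1)" for P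
    by (rule stable_affexp_ode[where k = "-1", simplified add_uminus_conv_diff])
      (use c in \<open>simp_all add: \<Sigma>\<close>)
  have "r < 0"
    using assms(3,4) c by (simp add: r_def)
  then have "0 \<le> r * (P - \<Xi>p)" if "P \<le> \<Xi>p" for P
    using that by (intro mult_nonpos_nonpos) simp_all
  moreover have "0 < C"
    using assms(2,4,6) by (simp add: C_def add_pos_pos)
  ultimately have pos: "0 < affexp_deriv \<delta> C (1 / c) \<Xi>m P"
    "P \<le> \<Xi>p \<Longrightarrow> 0 < affexp_deriv b A r \<Xi>p P"
    "0 < affexp_deriv \<delta> 0 (1 / c) \<Xi>p P" for P
    using c assms(2-4) unfolding b_def A_def r_def
    by (auto intro!: stable_affexp_deriv_pos spinodal_affexp_deriv_pos)
  have "r * (\<Xi>m - \<Xi>p) = (1 - \<kappa>) / (\<kappa> * \<tau> * \<bar>\<Omega>\<bar>) * (\<Xi>p - \<Xi>m)"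
    and "A = - (\<kappa> * \<tau> * \<bar>\<Omega>\<bar> * \<delta> / (1 - \<kappa>)\<^sup>2)"
    unfolding r_def A_def c_def \<open>\<bar>\<Omega>\<bar> = \<Omega>\<close>
    by (simp_all only: mult_minus_right[symmetric] minus_diff_eq mult_minus_left mult.assoc)
  then have "A * (exp (r * (\<Xi>m - \<Xi>p)) - 1) = - (2 * \<kappa> + \<kappa> * \<delta> / (1 - \<kappa>) * (\<Xi>p - \<Xi>m))"
    using interface_width_equation_scaled[OF _ _ transc] assms by simp
  moreover have "b * (\<Xi>m - \<Xi>p) = \<kappa> * \<delta> / (1 - \<kappa>) * (\<Xi>p - \<Xi>m)"
    unfolding b_def by (simp only: mult_minus_right[symmetric] minus_diff_eq mult_minus_left)
  ultimately have junction: "affexp \<kappa> b A r \<Xi>p \<Xi>m = - \<kappa>"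
    unfolding affexp_def by linarith
  have "increasing_wave_profile \<tau> \<delta> \<kappa> \<Omega> \<Sigma> (X_R \<tau> \<delta> \<kappa> \<Omega> \<Xi>m \<Xi>p)
    \<and> X_R \<tau> \<delta> \<kappa> \<Omega> \<Xi>m \<Xi>p \<Xi>m = - \<kappa> \<and> X_R \<tau> \<delta> \<kappa> \<Omega> \<Xi>m \<Xi>p \<Xi>p = \<kappa>"
    unfolding X_R c_def
    by (rule increasing_wave_profile_three_pieces[OF _ _ _
          has_real_derivative_affexp has_real_derivative_affexp has_real_derivative_affexp])
      (use ode1 ode2 ode3 pos junction assms in \<open>auto simp: c_def\<close>)
  then show ?thesis
    by (simp add: \<Sigma>_def)
qed


lemma X_TW_increasing_wave_profile:
  assumes "\<tau> > 0" "\<delta> > 0" "0 < \<kappa>" "\<kappa> < 1" "\<Omega> \<noteq> 0" "\<Xi>m < \<Xi>p"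
    and "2 * (1 - \<kappa>)\<^sup>2 / (\<tau> * \<bar>\<Omega>\<bar> * \<delta>) + (1 - \<kappa>) / (\<tau> * \<bar>\<Omega>\<bar>) * (\<Xi>p - \<Xi>m)
           = exp ((1 - \<kappa>) / (\<kappa> * \<tau> * \<bar>\<Omega>\<bar>) * (\<Xi>p - \<Xi>m)) - 1"
  shows "increasing_wave_profile \<tau> \<delta> \<kappa> \<Omega> (Sigma_TW \<tau> \<delta> \<kappa> \<Omega> \<Xi>m \<Xi>p) (X_TW \<tau> \<delta> \<kappa> \<Omega> \<Xi>m \<Xi>p)
    \<and> X_TW \<tau> \<delta> \<kappa> \<Omega> \<Xi>m \<Xi>p \<Xi>m = - \<kappa> \<and> X_TW \<tau> \<delta> \<kappa> \<Omega> \<Xi>m \<Xi>p \<Xi>p = \<kappa>"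
proof (cases "\<Omega> < 0")
  case True
  then show ?thesis
    using X_L_increasing_wave_profile[OF assms(1-4) True assms(6,7)] by (simp add: X_TW_def Sigma_TW_def)
next
  case False
  then have "0 < \<Omega>"
    using \<open>\<Omega> \<noteq> 0\<close> by simp
  with False show ?thesis
    using X_R_increasing_wave_profile[OF assms(1-4) _ assms(6,7)] by (simp add: X_TW_def Sigma_TW_def)
qed

theorem theorem2p1:
  fixes \<tau> \<delta> \<kappa> \<Omega> \<Xi>m \<Xi>p :: real
  assumes tau_pos: "\<tau> > 0" and delta_pos: "\<delta> > 0"
    and kappa: "0 < \<kappa>" "\<kappa> < 1"
    and Omega_ne: "\<Omega> \<noteq> 0"
    and Xi_lt: "\<Xi>m < \<Xi>p"
    and transc: "2 * (1 - \<kappa>)\<^sup>2 / (\<tau> * \<bar>\<Omega>\<bar> * \<delta>) + (1 - \<kappa>) / (\<tau> * \<bar>\<Omega>\<bar>) * (\<Xi>p - \<Xi>m)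
                 = exp ((1 - \<kappa>) / (\<kappa> * \<tau> * \<bar>\<Omega>\<bar>) * (\<Xi>p - \<Xi>m)) - 1"
  defines "x \<equiv> (\<lambda>t p. X_TW \<tau> \<delta> \<kappa> \<Omega> \<Xi>m \<Xi>p (p - \<Omega> * t))"
    and "\<sigma> \<equiv> (\<lambda>t. Sigma_TW \<tau> \<delta> \<kappa> \<Omega> \<Xi>m \<Xi>p - \<delta> * (\<Omega> * t - 1 / 2))"
  shows "(\<forall>t p. ((\<lambda>s. x s p) has_real_derivative
                   (\<sigma> t + \<delta> * (p - 1 / 2) - Hprime \<kappa> (x t p)) / \<tau>) (at t))
       \<and> (\<forall>t. strict_mono (\<lambda>p. x t p))
       \<and> (\<forall>P. P < \<Xi>m \<longrightarrow> X_TW \<tau> \<delta> \<kappa> \<Omega> \<Xi>m \<Xi>p P < - \<kappa>)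
       \<and> (\<forall>P. \<Xi>m < P \<and> P < \<Xi>p \<longrightarrow> - \<kappa> < X_TW \<tau> \<delta> \<kappa> \<Omega> \<Xi>m \<Xi>p P \<and> X_TW \<tau> \<delta> \<kappa> \<Omega> \<Xi>m \<Xi>p P < \<kappa>)
       \<and> (\<forall>P. \<Xi>p < P \<longrightarrow> X_TW \<tau> \<delta> \<kappa> \<Omega> \<Xi>m \<Xi>p P > \<kappa>)"
proof -
  let ?X = "X_TW \<tau> \<delta> \<kappa> \<Omega> \<Xi>m \<Xi>p"
  have profile: "increasing_wave_profile \<tau> \<delta> \<kappa> \<Omega> (Sigma_TW \<tau> \<delta> \<kappa> \<Omega> \<Xi>m \<Xi>p) ?X"
    and ends: "?X \<Xi>m = - \<kappa>" "?X \<Xi>p = \<kappa>"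
    using X_TW_increasing_wave_profile[OF assms(1-7)] by simp_all
  have mono: "strict_mono ?X"
    using profile by (rule increasing_wave_profile_strict_mono)
  then have "strict_mono (\<lambda>p. x t p)" for t
    unfolding x_def by (intro strict_monoI strict_monoD[OF mono]) simp
  moreover have "((\<lambda>s. x s p) has_real_derivative
                   (\<sigma> t + \<delta> * (p - 1 / 2) - Hprime \<kappa> (x t p)) / \<tau>) (at t)" for t p
    unfolding x_def \<sigma>_def using traveling_wave_has_real_derivative[OF _ profile] tau_pos by simp
  ultimately show ?thesis
    using strict_monoD[OF mono] ends by (metis less_trans)
qed

end
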